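(* Let $G$ be the corresponding graph of an array $A$ with reach one, let $F$ be a resulting DFS forest of $G$, and let $T$ be a component of $F$ whose root $v$ has exactly two children $a_1,b_1$ (i.e. $T$ has two sub-trees stemming from the root). Apply the sub-tree merge to $T$ and let $H$ be $T$ together with all arcs added. Then $H$ contains a directed Hamiltonian path, i.e. a directed path visiting every vertex of $T$ exactly once.
   Context: An array is a finite sequence $A=(A[1],\dots,A[n])$ of pairwise distinct real numbers. The corresponding graph of $A$ with reach one is the directed graph on $\{1,\dots,n\}$ with an arc $(i,j)$ whenever $j\equiv i\pm1\pmod n$, $j\ne i$, and $A[i]<A[j]$. DFS is run with adjacency lists sorted in increasing $A$-value and a visiting list containing all vertices; the resulting DFS forest consists of the arcs $(\mathrm{parent}(w),w)$ along which DFS discovers vertices, and its components (of the underlying undirected graph) are rooted trees. Sub-tree merge of $T$: set $p=a_1$, $q=b_1$; while both $p,q$ are defined: if $A[p]<A[q]$, add the arc $(p,q)$ and replace $p$ by its smallest-valued child in $F$ (undefined if it has none); otherwise add the arc $(q,p)$ and replace $q$ by its smallest-valued child in $F$ (undefined if none). *)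

theory Defs
  imports Complex_Main
begin

text \<open>Vertices are 0,...,n-1 (the paper's 1,...,n shifted by one); the array is
  A :: nat => real, pairwise distinct on {0..<n}.\<close>

definition ra_arc :: "(nat \<Rightarrow> real) \<Rightarrow> nat \<Rightarrow> nat \<Rightarrow> nat \<Rightarrow> bool" where
  "ra_arc A n i j \<longleftrightarrow> i < n \<and> j < n \<and> j \<noteq> i \<and>
      (j = (i + 1) mod n \<or> i = (j + 1) mod n) \<and> A i < A j"

definition out_nbrs :: "(nat \<Rightarrow> real) \<Rightarrow> nat \<Rightarrow> nat \<Rightarrow> nat list" where
  "out_nbrs A n u = sort_key A (filter (\<lambda>j. ra_arc A n u j) [0..<n])"

text \<open>DFS as a state machine: (remaining visiting list, stack of frames
  (vertex, unexplored adjacency entries), visited set, parent map).\<close>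
type_synonym dfs_state = "nat list \<times> (nat \<times> nat list) list \<times> nat set \<times> (nat \<Rightarrow> nat option)"

fun dfs_step :: "(nat \<Rightarrow> real) \<Rightarrow> nat \<Rightarrow> dfs_state \<Rightarrow> dfs_state" where
  "dfs_step A n ([], [], vis, par) = ([], [], vis, par)"
| "dfs_step A n (r # L, [], vis, par) =
     (if r \<in> vis then (L, [], vis, par)
      else (L, [(r, out_nbrs A n r)], insert r vis, par))"
| "dfs_step A n (L, (u, []) # st, vis, par) = (L, st, vis, par)"
| "dfs_step A n (L, (u, w # ws) # st, vis, par) =
     (if w \<in> vis then (L, (u, ws) # st, vis, par)
      else (L, (w, out_nbrs A n w) # (u, ws) # st, insert w vis, par(w := Some u)))"

text \<open>The DFS run to completion (4n steps always suffice: n list entries,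
  at most 2n adjacency entries, at most n pops; afterwards the step is the identity).\<close>
definition dfs_parent :: "(nat \<Rightarrow> real) \<Rightarrow> nat \<Rightarrow> nat list \<Rightarrow> (nat \<Rightarrow> nat option)" where
  "dfs_parent A n L = snd (snd (snd ((dfs_step A n ^^ (4 * n + 4)) (L, [], {}, (\<lambda>_. None)))))"

definition forest_arcs :: "(nat \<Rightarrow> nat option) \<Rightarrow> (nat \<times> nat) set" where
  "forest_arcs par = {(u, w). par w = Some u}"

definition tree_verts :: "(nat \<Rightarrow> nat option) \<Rightarrow> nat \<Rightarrow> nat set" where
  "tree_verts par v = {w. (v, w) \<in> (forest_arcs par)\<^sup>*}"

definition children :: "(nat \<Rightarrow> nat option) \<Rightarrow> nat \<Rightarrow> nat set" where
  "children par u = {w. par w = Some u}"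

definition min_child :: "(nat \<Rightarrow> real) \<Rightarrow> (nat \<Rightarrow> nat option) \<Rightarrow> nat \<Rightarrow> nat option" where
  "min_child A par u =
     (if children par u = {} then None
      else Some (THE c. c \<in> children par u \<and> (\<forall>d \<in> children par u. A c \<le> A d)))"

text \<open>The arcs added by the sub-tree merge loop, with a step budget k
  (the loop runs at most n times, as each step moves to a new vertex).\<close>
fun merge_arcs :: "nat \<Rightarrow> (nat \<Rightarrow> real) \<Rightarrow> (nat \<Rightarrow> nat option) \<Rightarrow> nat option \<Rightarrow> nat option \<Rightarrow> (nat \<times> nat) set" where
  "merge_arcs (Suc k) A par (Some p) (Some q) =
     (if A p < A q then insert (p, q) (merge_arcs k A par (min_child A par p) (Some q))
      else insert (q, p) (merge_arcs k A par (Some p) (min_child A par q)))"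
| "merge_arcs _ A par _ _ = {}"

definition subtree_merge :: "nat \<Rightarrow> (nat \<Rightarrow> real) \<Rightarrow> (nat \<Rightarrow> nat option) \<Rightarrow> nat \<Rightarrow> nat \<Rightarrow> (nat \<times> nat) set" where
  "subtree_merge n A par a1 b1 = merge_arcs n A par (Some a1) (Some b1)"

definition ham_path :: "nat set \<Rightarrow> (nat \<times> nat) set \<Rightarrow> nat list \<Rightarrow> bool" where
  "ham_path V E xs \<longleftrightarrow> distinct xs \<and> set xs = V \<and>
      (\<forall>i. i + 1 < length xs \<longrightarrow> (xs ! i, xs ! (i + 1)) \<in> E)"

end

theory Submission
  imports Defs
begin

(*
  In the graph with reach one every vertex has only its two cycle neighbours, and a DFS
  tree arc always goes to a larger value.  A non-root vertex has one of its neighbours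
  as parent, so it has at most one child: the two sub-trees of v are chains
  a1 -> a2 -> ... and b1 -> b2 -> ..., and taking the smallest-valued child just walks
  down a chain.  The sub-tree merge is therefore the merge of the two chains by value:
  each added arc leads from the vertex just emitted to the head of the other chain, and
  the next emitted vertex is either that head or the successor in the same chain, which
  is joined by a tree arc.  So v followed by the merged sequence is a Hamiltonian path.
*)

fun dfs_invariant :: "(nat \<Rightarrow> real) \<Rightarrow> nat \<Rightarrow> dfs_state \<Rightarrow> bool" where
  "dfs_invariant A n (L, st, vis, par) \<longleftrightarrow>
     (\<forall>(u, ws) \<in> set st. \<forall>w \<in> set ws. ra_arc A n u w) \<and>
     (\<forall>w u. par w = Some u \<longrightarrow> ra_arc A n u w)"

lemma dfs_step_invariant: "dfs_invariant A n s \<Longrightarrow> dfs_invariant A n (dfs_step A n s)"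
  by (induction A n s rule: dfs_step.induct) (auto simp: out_nbrs_def)

lemma ra_arc_dfs_parent:
  assumes "dfs_parent A n L w = Some u"
  shows "ra_arc A n u w"
proof -
  have invariant: "dfs_invariant A n ((dfs_step A n ^^ k) (L, [], {}, \<lambda>_. None))" for k
    by (induction k) (simp_all add: dfs_step_invariant)
  obtain L' st vis par where "(dfs_step A n ^^ (4 * n + 4)) (L, [], {}, \<lambda>_. None) = (L', st, vis, par)"
    by (metis prod_cases4)
  with invariant[of "4 * n + 4"] assms show ?thesis
    by (simp add: dfs_parent_def)
qed

lemma cycle_adjacent_cases:
  fixes i j n :: nat
  assumes "i < n" "j < n" "j = (i + 1) mod n \<or> i = (j + 1) mod n"
  shows "j = (i + 1) mod n \<or> j = (i + n - 1) mod n"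
  using assms by (cases "j + 1 < n") (auto simp: mod_if)

abbreviation walk :: "('a \<times> 'a) set \<Rightarrow> 'a list \<Rightarrow> bool" where
  "walk E \<equiv> successively (\<lambda>x y. (x, y) \<in> E)"

lemma ham_path_iff_walk: "ham_path V E xs \<longleftrightarrow> distinct xs \<and> set xs = V \<and> walk E xs"
  by (simp add: ham_path_def successively_conv_nth)

lemma walk_mono: "walk E xs \<Longrightarrow> E \<subseteq> E' \<Longrightarrow> walk E' xs"
  by (erule successively_mono) auto

primrec hd_option :: "'a list \<Rightarrow> 'a option" where
  "hd_option [] = None"
| "hd_option (x # xs) = Some x"

fun child_chain :: "(nat \<Rightarrow> real) \<Rightarrow> (nat \<Rightarrow> nat option) \<Rightarrow> nat list \<Rightarrow> bool" where
  "child_chain A par [] = True"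
| "child_chain A par (x # xs) \<longleftrightarrow> min_child A par x = hd_option xs \<and> child_chain A par xs"

(* The order in which the sub-tree merge passes through the vertices of two chains. *)
fun merge_by :: "('a \<Rightarrow> 'b::ord) \<Rightarrow> 'a list \<Rightarrow> 'a list \<Rightarrow> 'a list" where
  "merge_by f (x # xs) (y # ys) =
     (if f x < f y then x # merge_by f xs (y # ys) else y # merge_by f (x # xs) ys)"
| "merge_by f [] ys = ys"
| "merge_by f xs [] = xs"

lemma set_merge_by [simp]: "set (merge_by f xs ys) = set xs \<union> set ys"
  by (induction f xs ys rule: merge_by.induct) auto

lemma length_merge_by [simp]: "length (merge_by f xs ys) = length xs + length ys"
  by (induction f xs ys rule: merge_by.induct) auto

lemma distinct_merge_by:
  "distinct xs \<Longrightarrow> distinct ys \<Longrightarrow> set xs \<inter> set ys = {} \<Longrightarrow> distinct (merge_by f xs ys)"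
  by (induction f xs ys rule: merge_by.induct) auto

lemma hd_merge_by: "hd (merge_by f (x # xs) (y # ys)) \<in> {x, y}"
  by simp

lemma walk_merge_by_merge_arcs:
  assumes "child_chain A par P" and "child_chain A par Q" and "length P + length Q \<le> k"
    and "walk E P" and "walk E Q"
  shows "walk (E \<union> merge_arcs k A par (hd_option P) (hd_option Q)) (merge_by A P Q)"
  using assms
proof (induction A P Q arbitrary: k rule: merge_by.induct)
  case (1 A p P q Q)
  then obtain k' where k: "k = Suc k'" by (cases k) auto
  show ?case
  proof (cases "A p < A q")
    case True
    let ?M = "merge_by A P (q # Q)" and ?X = "merge_arcs k' A par (hd_option P) (Some q)"
    have "walk (E \<union> ?X) ?M"
      using "1.IH"(1)[OF True] "1.prems" k by (auto simp: successively_Cons)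
    then have "walk (E \<union> insert (p, q) ?X) ?M"
      by (rule walk_mono) auto
    moreover have "(p, hd ?M) \<in> E \<union> {(p, q)}"
      using "1.prems"(4) hd_merge_by[of A _ _ q Q] by (cases P) auto
    ultimately show ?thesis
      using True k "1.prems"(1) by (auto simp: successively_Cons)
  next
    case False
    let ?M = "merge_by A (p # P) Q" and ?X = "merge_arcs k' A par (Some p) (hd_option Q)"
    have "walk (E \<union> ?X) ?M"
      using "1.IH"(2)[OF False] "1.prems" k by (auto simp: successively_Cons)
    then have "walk (E \<union> insert (q, p) ?X) ?M"
      by (rule walk_mono) auto
    moreover have "(q, hd ?M) \<in> E \<union> {(q, p)}"
      using "1.prems"(5) hd_merge_by[of A p P] by (cases Q) auto
    ultimately show ?thesis
      using False k "1.prems"(2) by (auto simp: successively_Cons)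
  qed
qed (auto elim: walk_mono)

lemma tree_verts_unfold:
  "tree_verts par x = insert x (\<Union>c \<in> children par x. tree_verts par c)"
  unfolding tree_verts_def children_def
  by (auto elim: converse_rtranclE intro: converse_rtrancl_into_rtrancl simp: forest_arcs_def)

lemma min_child_singleton: "children par x = {c} \<Longrightarrow> min_child A par x = Some c"
  unfolding min_child_def by (auto intro: the_equality)

lemma forest_arcs_rtrancl_comparable:
  assumes "(x, w) \<in> (forest_arcs par)\<^sup>*" and "(y, w) \<in> (forest_arcs par)\<^sup>*"
  shows "(x, y) \<in> (forest_arcs par)\<^sup>* \<or> (y, x) \<in> (forest_arcs par)\<^sup>*"
  using assms
proof (induction rule: rtrancl_induct)
  case (step u w)
  show ?case
  proof (cases "y = w")
    case False
    with step.prems obtain u' where "(y, u') \<in> (forest_arcs par)\<^sup>*" "(u', w) \<in> forest_arcs par"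
      by (auto elim: rtranclE)
    with step.hyps(2) have "(y, u) \<in> (forest_arcs par)\<^sup>*"
      by (simp add: forest_arcs_def)
    then show ?thesis by (rule step.IH)
  qed (use step.hyps in \<open>simp add: rtrancl.rtrancl_into_rtrancl\<close>)
qed simp

context
  fixes A :: "nat \<Rightarrow> real" and n :: nat and par :: "nat \<Rightarrow> nat option"
  assumes parent_arc: "\<And>w u. par w = Some u \<Longrightarrow> ra_arc A n u w"
begin

lemma forest_arcsD: "(u, w) \<in> forest_arcs par \<Longrightarrow> A u < A w \<and> u < n \<and> w < n"
  using parent_arc by (auto simp: forest_arcs_def ra_arc_def)

lemma forest_trancl_less: "(u, w) \<in> (forest_arcs par)\<^sup>+ \<Longrightarrow> A u < A w"
  by (induction rule: trancl_induct) (auto dest: forest_arcsD)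

lemma wf_converse_forest_arcs: "wf ((forest_arcs par)\<inverse>)"
proof (rule finite_acyclic_wf_converse)
  have "forest_arcs par \<subseteq> {0..<n} \<times> {0..<n}"
    using forest_arcsD by auto
  then show "finite (forest_arcs par)"
    by (rule finite_subset) simp
  show "acyclic (forest_arcs par)"
    unfolding acyclic_def using forest_trancl_less less_irrefl by blast
qed

lemma tree_verts_subset:
  assumes "x < n"
  shows "tree_verts par x \<subseteq> {0..<n}"
proof
  fix w
  assume "w \<in> tree_verts par x"
  then have "(x, w) \<in> (forest_arcs par)\<^sup>*"
    by (simp add: tree_verts_def)
  then show "w \<in> {0..<n}"
    using assms by (cases rule: rtranclE) (auto dest: forest_arcsD)
qed

lemma parent_notin_tree_verts:
  assumes "par c = Some x"
  shows "x \<notin> tree_verts par c"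
proof
  assume "x \<in> tree_verts par c"
  then have "(c, x) \<in> (forest_arcs par)\<^sup>*"
    by (simp add: tree_verts_def)
  with assms have "(x, x) \<in> (forest_arcs par)\<^sup>+"
    by (simp add: forest_arcs_def rtrancl_into_trancl2)
  then show False
    by (auto dest: forest_trancl_less)
qed

lemma tree_verts_siblings_disjoint:
  assumes "par a = Some v" and "par b = Some v" and "a \<noteq> b"
  shows "tree_verts par a \<inter> tree_verts par b = {}"
proof -
  have unreachable: "(a, b) \<notin> (forest_arcs par)\<^sup>*"
    if "par a = Some v" "par b = Some v" "a \<noteq> b" for a b
  proof
    assume "(a, b) \<in> (forest_arcs par)\<^sup>*"
    with \<open>a \<noteq> b\<close> obtain u where "(a, u) \<in> (forest_arcs par)\<^sup>*" "(u, b) \<in> forest_arcs par"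
      by (auto elim: rtranclE)
    with that have "v \<in> tree_verts par a"
      by (simp add: tree_verts_def forest_arcs_def)
    with parent_notin_tree_verts[OF that(1)] show False by blast
  qed
  have False if "w \<in> tree_verts par a" "w \<in> tree_verts par b" for w
  proof -
    from that have "(a, w) \<in> (forest_arcs par)\<^sup>*" "(b, w) \<in> (forest_arcs par)\<^sup>*"
      by (simp_all add: tree_verts_def)
    then have "(a, b) \<in> (forest_arcs par)\<^sup>* \<or> (b, a) \<in> (forest_arcs par)\<^sup>*"
      by (rule forest_arcs_rtrancl_comparable)
    with assms unreachable[of a b] unreachable[of b a] show False by blast
  qed
  then show ?thesis by blast
qed

lemma nonroot_at_most_one_child:
  assumes "par x = Some u" and "c \<in> children par x" and "d \<in> children par x"
  shows "c = d"
proof -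
  have arcs: "ra_arc A n u x" "ra_arc A n x c" "ra_arc A n x d"
    using assms parent_arc by (auto simp: children_def)
  then have "u \<noteq> c" "u \<noteq> d"
    by (auto simp: ra_arc_def)
  moreover have "y \<in> {(x + 1) mod n, (x + n - 1) mod n}" if "y \<in> {u, c, d}" for y
    using that arcs cycle_adjacent_cases[of x n y] unfolding ra_arc_def by auto
  ultimately show ?thesis by auto
qed

lemma child_chain_exists:
  "par x \<noteq> None \<Longrightarrow> \<exists>P. child_chain A par (x # P) \<and> walk (forest_arcs par) (x # P) \<and>
     distinct (x # P) \<and> set (x # P) = tree_verts par x"
proof (induction x rule: wf_induct[OF wf_converse_forest_arcs])
  case (1 x)
  then obtain u where u: "par x = Some u" by blast
  show ?case
  proof (cases "children par x = {}")
    case True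
    then show ?thesis
      using tree_verts_unfold[of par x] by (intro exI[of _ "[]"]) (simp add: min_child_def)
  next
    case False
    then obtain c where "children par x = {c}"
      using nonroot_at_most_one_child[OF u] by blast
    then have c: "par c = Some x" "min_child A par x = Some c"
        "tree_verts par x = insert x (tree_verts par c)"
      using min_child_singleton tree_verts_unfold[of par x] by (auto simp: children_def)
    then have "(c, x) \<in> (forest_arcs par)\<inverse>"
      by (simp add: forest_arcs_def)
    with "1.IH" c obtain P where P: "child_chain A par (c # P)" "walk (forest_arcs par) (c # P)"
        "distinct (c # P)" "set (c # P) = tree_verts par c"
      by blast
    show ?thesis
      using P c parent_notin_tree_verts[OF c(1)]
      by (intro exI[of _ "c # P"]) (simp add: forest_arcs_def)
  qed
qed

lemma ham_path_subtree_merge: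
  assumes "v < n" and "a1 \<noteq> b1" and children: "children par v = {a1, b1}"
  shows "\<exists>xs. ham_path (tree_verts par v)
           ({(u, w) \<in> forest_arcs par. w \<in> tree_verts par v} \<union> subtree_merge n A par a1 b1) xs"
proof -
  let ?T = "tree_verts par v"
  from children have pa: "par a1 = Some v" and pb: "par b1 = Some v"
    by (auto simp: children_def)
  obtain Pa where Pa: "child_chain A par (a1 # Pa)" "walk (forest_arcs par) (a1 # Pa)"
      "distinct (a1 # Pa)" "set (a1 # Pa) = tree_verts par a1"
    using child_chain_exists pa by blast
  obtain Pb where Pb: "child_chain A par (b1 # Pb)" "walk (forest_arcs par) (b1 # Pb)"
      "distinct (b1 # Pb)" "set (b1 # Pb) = tree_verts par b1"
    using child_chain_exists pb by blast
  define M where "M = merge_by A (a1 # Pa) (b1 # Pb)"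
  have M: "set M = tree_verts par a1 \<union> tree_verts par b1"
      "length M = length (a1 # Pa) + length (b1 # Pb)" "hd M \<in> {a1, b1}"
    using Pa(4) Pb(4) hd_merge_by[of A a1 Pa b1 Pb] unfolding M_def by (simp_all del: merge_by.simps)
  have verts: "set (v # M) = ?T"
    using tree_verts_unfold[of par v] children M(1) by simp
  have "distinct M"
    unfolding M_def using Pa(3,4) Pb(3,4) tree_verts_siblings_disjoint[OF pa pb \<open>a1 \<noteq> b1\<close>]
    by (intro distinct_merge_by) auto
  with M(1) parent_notin_tree_verts[OF pa] parent_notin_tree_verts[OF pb]
  have distinct: "distinct (v # M)"
    by simp
  have "length (v # M) \<le> n"
    using distinct_card[OF distinct] verts
      card_mono[OF finite_atLeastLessThan tree_verts_subset[OF \<open>v < n\<close>]]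
    by simp
  with M(2) have len: "length (a1 # Pa) + length (b1 # Pb) \<le> n"
    by simp
  have "walk (forest_arcs par \<union> subtree_merge n A par a1 b1) M"
    using walk_merge_by_merge_arcs[OF Pa(1) Pb(1) len Pa(2) Pb(2)]
    unfolding subtree_merge_def M_def hd_option.simps .
  moreover have "(v, hd M) \<in> forest_arcs par"
    using M(3) pa pb by (auto simp: forest_arcs_def)
  ultimately have "walk (forest_arcs par \<union> subtree_merge n A par a1 b1) (v # M)"
    by (simp add: successively_Cons)
  then have "walk ({(u, w) \<in> forest_arcs par. w \<in> ?T} \<union> subtree_merge n A par a1 b1) (v # M)"
    by (rule successively_mono) (use verts in auto)
  with distinct verts show ?thesis
    unfolding ham_path_iff_walk by blast
qed

end

theorem theorem9:
  fixes A :: "nat \<Rightarrow> real" and n :: nat and L :: "nat list" and v a1 b1 :: nat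
  assumes "inj_on A {0..<n}"
    and "distinct L" and "set L = {0..<n}"
    and "v < n" and "dfs_parent A n L v = None"
    and "a1 \<noteq> b1" and "children (dfs_parent A n L) v = {a1, b1}"
  shows "\<exists>xs. ham_path (tree_verts (dfs_parent A n L) v)
           ({(u, w) \<in> forest_arcs (dfs_parent A n L). w \<in> tree_verts (dfs_parent A n L) v}
              \<union> subtree_merge n A (dfs_parent A n L) a1 b1) xs"
  using ham_path_subtree_merge[OF ra_arc_dfs_parent assms(4,6,7)] .

end
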